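(* In any one-dimensional robot game $(U,V)$, if two counter values $x,y\in\mathbb{Z}$ are winning, then $x+y$ is winning.
   Context: A robot game in dimension one is a pair $(U,V)$ of finite nonempty subsets of $\mathbb{Z}$; $U$ belongs to the reacher and $V$ to the opponent. From an initial counter value $x_0\in\mathbb{Z}$, a play proceeds in rounds: in a round starting at counter value $x$, the opponent chooses $v\in V$ and the counter becomes $x+v$, then the reacher chooses $u\in U$ and the counter becomes $x+v+u$, where the round ends. The reacher wins the play if some round ends at $0$; by convention the reacher wins immediately if the play starts at $0$. Strategies are functions from play prefixes to moves. A counter value $x$ is winning if the reacher has a strategy such that, against every opponent strategy, the play from $x$ is won by the reacher. *)

theory Defs
  imports Main
begin

text \<open>A play prefix is the chronological list of all counter values visited so far:
  [x0, x0+v1, x0+v1+u1, x0+v1+u1+v2, ...]. Strategies map play prefixes to moves.\<close>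

type_synonym strategy = "int list \<Rightarrow> int"

fun play_hist :: "strategy \<Rightarrow> strategy \<Rightarrow> int \<Rightarrow> nat \<Rightarrow> int list" where
  "play_hist s t x0 0 = [x0]"
| "play_hist s t x0 (Suc n) =
     (let h = play_hist s t x0 n;
          h' = h @ [last h + t h]
      in h' @ [last h' + s h'])"

definition valid_strategy :: "int set \<Rightarrow> strategy \<Rightarrow> bool" where
  "valid_strategy M f \<longleftrightarrow> (\<forall>h. f h \<in> M)"

text \<open>The reacher wins the play if it starts at 0 or some round ends at 0.\<close>
definition reacher_wins_play :: "strategy \<Rightarrow> strategy \<Rightarrow> int \<Rightarrow> bool" where
  "reacher_wins_play s t x0 \<longleftrightarrow> (\<exists>n. last (play_hist s t x0 n) = 0)"

definition winning :: "int set \<Rightarrow> int set \<Rightarrow> int \<Rightarrow> bool" where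
  "winning U V x \<longleftrightarrow>
     (\<exists>s. valid_strategy U s \<and>
        (\<forall>t. valid_strategy V t \<longrightarrow> reacher_wins_play s t x))"

end

theory Submission
  imports Defs
begin

text \<open>From x + y the reacher first plays its winning strategy for x on the counter shifted
  by y; against any opponent this drives the counter to y at the end of some round. From
  that moment on it plays its winning strategy for y, treating the history so far as a
  fixed prefix.\<close>

lemma length_play_hist [simp]: "length (play_hist s t x0 n) = 2 * n + 1"
  by (induction n) (auto simp: Let_def)

lemma play_hist_not_Nil [simp]: "play_hist s t x0 n \<noteq> []"
  by (metis length_play_hist list.size(3) add_is_0 one_neq_zero)

lemma take_play_hist:
  assumes "m \<le> n"
  shows "take (2 * m + 1) (play_hist s t x0 n) = play_hist s t x0 m"
  using assms
proof (induction n)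
  case (Suc n)
  show ?case
  proof (cases "m = Suc n")
    case False
    with Suc have "take (2 * m + 1) (play_hist s t x0 n) = play_hist s t x0 m" by simp
    moreover have "2 * m + 1 \<le> length (play_hist s t x0 n)" using Suc.prems False by simp
    ultimately show ?thesis by (simp add: Let_def)
  qed (simp add: Let_def)
qed simp

lemma nth_play_hist:
  assumes "j \<le> n"
  shows "play_hist s t x0 n ! (2 * j) = last (play_hist s t x0 j)"
proof -
  have "play_hist s t x0 n ! (2 * j) = take (2 * j + 1) (play_hist s t x0 n) ! (2 * j)"
    by simp
  also have "\<dots> = play_hist s t x0 j ! (2 * j)"
    using assms by (simp only: take_play_hist)
  finally show ?thesis by (simp add: last_conv_nth)
qed

definition mid_hist :: "strategy \<Rightarrow> strategy \<Rightarrow> int \<Rightarrow> nat \<Rightarrow> int list" where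
  "mid_hist s t x0 n = play_hist s t x0 n @ [last (play_hist s t x0 n) + t (play_hist s t x0 n)]"

lemma play_hist_Suc_mid_hist:
  "play_hist s t x0 (Suc n) = mid_hist s t x0 n @ [last (mid_hist s t x0 n) + s (mid_hist s t x0 n)]"
  by (simp add: mid_hist_def Let_def)

lemma nth_mid_hist:
  assumes "j \<le> n"
  shows "mid_hist s t x0 n ! (2 * j) = last (play_hist s t x0 j)"
  using assms by (simp add: mid_hist_def nth_append nth_play_hist)

lemma play_hist_cong:
  assumes "\<And>k. k < n \<Longrightarrow> s' (mid_hist s t x0 k) = s (mid_hist s t x0 k)"
  shows "play_hist s' t x0 n = play_hist s t x0 n"
  using assms
proof (induction n)
  case (Suc n)
  then have "mid_hist s' t x0 n = mid_hist s t x0 n" by (simp add: mid_hist_def)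
  with Suc.prems show ?case by (simp only: play_hist_Suc_mid_hist)
qed simp

lemma play_hist_add:
  fixes s t :: strategy and x0 :: int and n :: nat
  defines "pre \<equiv> butlast (play_hist s t x0 n)"
  shows "play_hist s t x0 (n + m) =
    pre @ play_hist (\<lambda>h. s (pre @ h)) (\<lambda>h. t (pre @ h)) (last (play_hist s t x0 n)) m"
proof (induction m)
  case 0
  show ?case unfolding pre_def by simp
next
  case (Suc m)
  then show ?case by (simp add: Let_def)
qed

definition shift_strategy :: "int \<Rightarrow> strategy \<Rightarrow> strategy" where
  "shift_strategy c f h = f (map (\<lambda>z. z - c) h)"

lemma valid_shift_strategy: "valid_strategy M f \<Longrightarrow> valid_strategy M (shift_strategy c f)"
  by (simp add: valid_strategy_def shift_strategy_def)

lemma play_hist_shift_strategy: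
  "play_hist (shift_strategy c s) t (x0 + c) n =
    map (\<lambda>z. z + c) (play_hist s (shift_strategy (- c) t) x0 n)"
  by (induction n) (simp_all add: Let_def last_map shift_strategy_def comp_def)

text \<open>Even positions of a history are the start and the ends of rounds.\<close>

definition visits_at :: "int \<Rightarrow> int list \<Rightarrow> nat \<Rightarrow> bool" where
  "visits_at y h k \<longleftrightarrow> k < length h \<and> even k \<and> h ! k = y"

definition switch_at :: "int \<Rightarrow> strategy \<Rightarrow> strategy \<Rightarrow> strategy" where
  "switch_at y s1 s2 h =
    (if \<exists>k. visits_at y h k then s2 (drop (LEAST k. visits_at y h k) h) else s1 h)"

lemma valid_switch_at:
  "valid_strategy M s1 \<Longrightarrow> valid_strategy M s2 \<Longrightarrow> valid_strategy M (switch_at y s1 s2)"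
  by (simp add: valid_strategy_def switch_at_def)

lemma switch_at_append:
  assumes "even (length pre)" and "\<And>k. \<not> visits_at y pre k" and "q \<noteq> []" and "hd q = y"
  shows "switch_at y s1 s2 (pre @ q) = s2 q"
proof -
  have visit: "visits_at y (pre @ q) (length pre)"
    using assms(1,3,4) by (simp add: visits_at_def nth_append hd_conv_nth)
  have "(LEAST k. visits_at y (pre @ q) k) = length pre"
  proof (rule Least_equality[where P = "visits_at y (pre @ q)", OF visit])
    fix k assume "visits_at y (pre @ q) k"
    then show "length pre \<le> k"
      using assms(2)[of k] by (cases "k < length pre") (auto simp: visits_at_def nth_append)
  qed
  with visit show ?thesis by (auto simp: switch_at_def)
qed

lemma play_hist_switch_at:
  fixes s1 s2 t :: strategy and x0 :: int and N :: nat
  defines "pre \<equiv> butlast (play_hist s1 t x0 N)"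
  assumes reach: "last (play_hist s1 t x0 N) = y"
    and first: "\<And>j. j < N \<Longrightarrow> last (play_hist s1 t x0 j) \<noteq> y"
  shows "play_hist (switch_at y s1 s2) t x0 (N + m) = pre @ play_hist s2 (\<lambda>h. t (pre @ h)) y m"
proof -
  have before: "play_hist (switch_at y s1 s2) t x0 N = play_hist s1 t x0 N"
  proof (rule play_hist_cong)
    fix k assume "k < N"
    have "\<not> visits_at y (mid_hist s1 t x0 k) i" for i
    proof
      assume "visits_at y (mid_hist s1 t x0 k) i"
      then obtain j where "i = 2 * j" "j \<le> k" "mid_hist s1 t x0 k ! i = y"
        by (auto simp: visits_at_def mid_hist_def elim!: evenE)
      with first[of j] \<open>k < N\<close> show False by (simp add: nth_mid_hist)
    qed
    then show "switch_at y s1 s2 (mid_hist s1 t x0 k) = s1 (mid_hist s1 t x0 k)"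
      by (simp add: switch_at_def)
  qed
  have pre_unvisited: "\<not> visits_at y pre i" for i
  proof
    assume "visits_at y pre i"
    then obtain j where "i = 2 * j" "j < N" "play_hist s1 t x0 N ! i = y"
      by (auto simp: visits_at_def pre_def nth_butlast elim!: evenE)
    with first[of j] show False by (simp add: nth_play_hist)
  qed
  have after: "play_hist (\<lambda>h. switch_at y s1 s2 (pre @ h)) t' y m = play_hist s2 t' y m" for t'
  proof (rule play_hist_cong)
    fix k
    have "hd (mid_hist s2 t' y k) = y"
      using nth_mid_hist[of 0 k s2 t' y] by (simp add: hd_conv_nth mid_hist_def)
    then show "switch_at y s1 s2 (pre @ mid_hist s2 t' y k) = s2 (mid_hist s2 t' y k)"
      by (intro switch_at_append pre_unvisited) (simp_all add: pre_def mid_hist_def)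
  qed
  have "play_hist (switch_at y s1 s2) t x0 (N + m) =
      pre @ play_hist (\<lambda>h. switch_at y s1 s2 (pre @ h)) (\<lambda>h. t (pre @ h)) y m"
    using play_hist_add[of "switch_at y s1 s2" t x0 N m] by (simp add: before reach pre_def)
  with after show ?thesis by simp
qed

lemma winning_if_forced_into_winning:
  assumes "valid_strategy U s"
    and reaches: "\<And>t. valid_strategy V t \<Longrightarrow> \<exists>n. last (play_hist s t x0 n) = y"
    and "winning U V y"
  shows "winning U V x0"
proof -
  obtain s2 where s2: "valid_strategy U s2"
    and s2_wins: "\<And>t. valid_strategy V t \<Longrightarrow> reacher_wins_play s2 t y"
    using \<open>winning U V y\<close> by (auto simp: winning_def)
  have "reacher_wins_play (switch_at y s s2) t x0" if t: "valid_strategy V t" for t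
  proof -
    define N where "N = (LEAST n. last (play_hist s t x0 n) = y)"
    have reach: "last (play_hist s t x0 N) = y"
      unfolding N_def using reaches[OF t] by (rule LeastI_ex)
    have first: "last (play_hist s t x0 j) \<noteq> y" if "j < N" for j
      using that unfolding N_def by (rule not_less_Least)
    define pre where "pre = butlast (play_hist s t x0 N)"
    have "valid_strategy V (\<lambda>h. t (pre @ h))"
      using t by (simp add: valid_strategy_def)
    then obtain m where "last (play_hist s2 (\<lambda>h. t (pre @ h)) y m) = 0"
      using s2_wins by (auto simp: reacher_wins_play_def)
    then have "last (play_hist (switch_at y s s2) t x0 (N + m)) = 0"
      using play_hist_switch_at[of s t x0 N y s2 m, OF reach first] by (simp add: pre_def)
    then show ?thesis by (auto simp: reacher_wins_play_def)
  qed
  with assms(1) s2 show ?thesis by (auto simp: winning_def intro: valid_switch_at)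
qed

lemma shift_strategy_reaches:
  assumes "\<And>t. valid_strategy V t \<Longrightarrow> reacher_wins_play s t x"
    and "valid_strategy V t"
  shows "\<exists>n. last (play_hist (shift_strategy c s) t (x + c) n) = c"
proof -
  obtain n where "last (play_hist s (shift_strategy (- c) t) x n) = 0"
    using assms(1)[OF valid_shift_strategy[OF assms(2)]] by (auto simp: reacher_wins_play_def)
  then show ?thesis by (auto simp: play_hist_shift_strategy last_map)
qed

theorem proposition1:
  fixes U V :: "int set" and x y :: int
  assumes "finite U" "U \<noteq> {}" "finite V" "V \<noteq> {}"
    and "winning U V x" and "winning U V y"
  shows "winning U V (x + y)"
proof -
  obtain s where s: "valid_strategy U s"
    and s_wins: "\<And>t. valid_strategy V t \<Longrightarrow> reacher_wins_play s t x"
    using \<open>winning U V x\<close> by (auto simp: winning_def)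
  show ?thesis
  proof (rule winning_if_forced_into_winning)
    show "valid_strategy U (shift_strategy y s)" using s by (rule valid_shift_strategy)
    show "\<exists>n. last (play_hist (shift_strategy y s) t (x + y) n) = y" if "valid_strategy V t" for t
      using s_wins that by (rule shift_strategy_reaches)
  qed fact
qed

end
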